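(* Let $p\geq 3$ be a prime and $k$ a positive integer, and suppose that the sequence $\big(\nu_{p}(A_{p,k}(n))\big)_{n\in\mathbb{N}}$ is eventually constant and equal to $1$. Then: (a) if $p-1\mid k$, then $p\nmid k$; (b) if $p-1\nmid k$, $k=(p-1)k'+q$ for some integer $k'$ and some $q\in\{1,\ldots,p-2\}$, and $p\mid k'+1$, then $p^{2}\nmid k'+1$.
   Context: For an integer $m\geq 2$ and a positive integer $k$, the integers $A_{m,k}(n)$, $n\in\mathbb{N}=\{0,1,2,\ldots\}$, are defined by the formal power series identity $\prod_{i=0}^{\infty}\big(1-x^{m^{i}}\big)^{-k}=\sum_{n=0}^{\infty}A_{m,k}(n)x^{n}$. For a prime $p$, $\nu_p(n)$ denotes the $p$-adic valuation of the integer $n$, with $\nu_p(0)=+\infty$. *)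

theory Defs
  imports "HOL-Computational_Algebra.Computational_Algebra"
begin

definition geom_fps :: "nat \<Rightarrow> int fps" where
  "geom_fps d = Abs_fps (\<lambda>j. if d dvd j then 1 else 0)"

lemma geom_fps_inverse:
  assumes "d \<ge> 1"
  shows "(1 - fps_X ^ d) * geom_fps d = 1"
proof (rule fps_ext)
  fix n
  show "fps_nth ((1 - fps_X ^ d) * geom_fps d) n = fps_nth 1 n"
    using assms
    by (cases "n < d") (auto simp: algebra_simps geom_fps_def fps_mult_fps_X_power_nonzero(1)
          fps_X_power_mult_nth dvd_imp_le dvd_diff_nat le_imp_diff_is_add dest: dvd_imp_le)
qed

text \<open>A_{m,k}(n) = coefficient of x^n in prod_{i>=0} (1 - x^(m^i))^(-k).
  Factors with m^i > n (in particular all i > n, as m >= 2) do not affect the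
  coefficient of x^n, so the product over i <= n gives the same coefficient.\<close>
definition A :: "nat \<Rightarrow> nat \<Rightarrow> nat \<Rightarrow> int" where
  "A m k n = fps_nth ((\<Prod>i\<le>n. geom_fps (m ^ i)) ^ k) n"

end

theory Submission
  imports Defs
begin

text \<open>
  The generating function F(x) = \<Sum>n A(n) x^n of A = A_{p,k} satisfies (1 - x)^k F(x) = F(x^p),
  i.e. \<Sum>i (-1)^i (k choose i) A(n - i) = A(n/p), with the right side 0 unless p divides n.
  Suppose p divides A(n) for all large n, and let d be the last index with p not dividing A(d)
  (d exists because A(0) = 1). Reading the recurrence modulo p at n = d + k, only the term
  i = k survives, so p divides d + k and (d + k)/p \<le> d; at n = pd the right side A(d)
  survives, which forces pd \<le> d + k. Hence k = (p - 1) d, so the hypothesis of (b) never holds.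

  For (a), if moreover p divides k then p divides d, and for odd p one has
  (1 - x)^(pd) \<equiv> (1 - x^p)^d modulo p^2. So (1 - x)^d satisfies the functional equation
  modulo p^2; as the equation determines a solution from its constant term, F \<equiv> (1 - x)^d
  modulo p^2. This is a polynomial, so p^2 divides A(n) for all n > d, contradicting
  \<nu>_p(A(n)) = 1.
\<close>

lemma fps_compose_fps_X_power_nth:
  fixes f :: "'a::semiring_1 fps"
  assumes "m > 0"
  shows "(f oo fps_X ^ m) $ n = (if m dvd n then f $ (n div m) else 0)"
proof -
  have "(f oo fps_X ^ m) $ n = (\<Sum>i=0..n. if i = n div m \<and> m dvd n then f $ i else 0)"
    unfolding fps_compose_nth power_mult [symmetric] fps_X_power_nth
    using assms by (intro sum.cong) auto
  also have "\<dots> = (if m dvd n then f $ (n div m) else 0)"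
    by (auto simp: sum.delta' div_le_dividend)
  finally show ?thesis .
qed

lemma geom_fps_compose_fps_X_power:
  "m > 0 \<Longrightarrow> geom_fps d oo fps_X ^ m = geom_fps (m * d)"
  by (rule fps_ext) (auto simp: fps_compose_fps_X_power_nth geom_fps_def elim!: dvdE)

lemma geom_fps_minus_one: "d \<ge> 1 \<Longrightarrow> geom_fps d - 1 = fps_X ^ d * geom_fps d"
  using geom_fps_inverse[of d] by (simp add: algebra_simps)

lemma fps_mult_nth_eq_if_fps_X_power_dvd_sub_one:
  fixes f g :: "'a::comm_ring_1 fps"
  assumes "fps_X ^ D dvd g - 1" "n < D"
  shows "(f * g ^ k) $ n = f $ n"
proof -
  have "g - 1 dvd g ^ k - 1"
    using power_diff_sumr2[of g k 1] by simp
  then have "fps_X ^ D dvd f * g ^ k - f"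
    using assms(1) by (metis dvd_trans dvd_mult right_diff_distrib mult_1_right)
  then obtain h where "f * g ^ k - f = fps_X ^ D * h" by (rule dvdE)
  then have "(f * g ^ k - f) $ n = 0"
    using assms(2) by (simp add: fps_X_power_mult_nth)
  then show ?thesis by simp
qed

lemma one_minus_fps_X_power_nth:
  "((1 - fps_X) ^ k :: 'a::comm_ring_1 fps) $ n = (-1) ^ n * of_nat (k choose n)"
proof (induction k arbitrary: n)
  case 0
  then show ?case by (cases n) simp_all
next
  case (Suc k)
  show ?case
  proof (cases n)
    case 0
    then show ?thesis by (simp add: Suc.IH)
  next
    case (Suc j)
    have "((1 - fps_X) ^ Suc k :: 'a fps) $ n = ((1 - fps_X) ^ k) $ Suc j - ((1 - fps_X) ^ k) $ j"
      by (simp add: Suc algebra_simps)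
    then show ?thesis by (simp add: Suc.IH Suc algebra_simps)
  qed
qed

definition geom_prod :: "nat \<Rightarrow> nat \<Rightarrow> int fps" where
  "geom_prod m M = (\<Prod>i\<le>M. geom_fps (m ^ i))"

lemma A_eq_geom_prod_power_nth:
  assumes "m \<ge> 2" "n \<le> M"
  shows "A m k n = (geom_prod m M ^ k) $ n"
  using assms(2)
proof (induction M rule: dec_induct)
  case base
  show ?case by (simp add: A_def geom_prod_def)
next
  case (step M)
  have "Suc M < 2 ^ Suc M" by (rule less_exp)
  also have "\<dots> \<le> m ^ Suc M" using assms(1) by (intro power_mono) auto
  finally have "n < m ^ Suc M" using step by simp
  moreover have "fps_X ^ (m ^ Suc M) dvd geom_fps (m ^ Suc M) - 1"
    using assms(1) by (simp add: geom_fps_minus_one)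
  ultimately have "(geom_prod m M ^ k * geom_fps (m ^ Suc M) ^ k) $ n = (geom_prod m M ^ k) $ n"
    by (intro fps_mult_nth_eq_if_fps_X_power_dvd_sub_one)
  then show ?case
    using step by (simp add: geom_prod_def power_mult_distrib)
qed

lemma geom_prod_Suc:
  assumes "m > 0"
  shows "geom_prod m (Suc M) = geom_fps 1 * (geom_prod m M oo fps_X ^ m)"
proof -
  have "geom_prod m M oo fps_X ^ m = (\<Prod>i\<le>M. geom_fps (m ^ Suc i))"
    using assms unfolding geom_prod_def
    by (simp add: fps_compose_prod_distrib geom_fps_compose_fps_X_power)
  then show ?thesis
    unfolding geom_prod_def prod.atMost_Suc_shift by simp
qed

definition A_fps :: "nat \<Rightarrow> nat \<Rightarrow> int fps" where
  "A_fps m k = Abs_fps (A m k)"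

lemma A_fps_functional_equation:
  assumes "m \<ge> 2"
  shows "(1 - fps_X) ^ k * A_fps m k = A_fps m k oo fps_X ^ m"
proof (rule fps_ext)
  fix n
  have "(1 - fps_X) ^ k * geom_prod m (Suc n) ^ k = ((1 - fps_X) * geom_fps 1) ^ k * (geom_prod m n oo fps_X ^ m) ^ k"
    using assms by (simp add: geom_prod_Suc power_mult_distrib mult_ac)
  also have "\<dots> = geom_prod m n ^ k oo fps_X ^ m"
    using assms geom_fps_inverse[of 1] by (simp add: fps_compose_power)
  finally have "((1 - fps_X) ^ k * geom_prod m (Suc n) ^ k) $ n = (geom_prod m n ^ k oo fps_X ^ m) $ n"
    by simp
  then show "((1 - fps_X) ^ k * A_fps m k) $ n = (A_fps m k oo fps_X ^ m) $ n"
    using assms unfolding fps_mult_nth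
    by (simp add: A_fps_def fps_compose_fps_X_power_nth A_eq_geom_prod_power_nth[of m _ "Suc n"]
        A_eq_geom_prod_power_nth[of m _ n])
qed

lemma A_0: "A m k 0 = 1"
  by (simp add: A_def geom_fps_def fps_nth_power_0)

lemma A_recurrence:
  assumes "m \<ge> 2"
  shows "(\<Sum>i=0..n. (-1) ^ i * int (k choose i) * A m k (n - i))
           = (if m dvd n then A m k (n div m) else 0)"
  using arg_cong[of _ _ "\<lambda>f. f $ n", OF A_fps_functional_equation[OF assms, of k]] assms
  by (simp add: fps_mult_nth A_fps_def fps_compose_fps_X_power_nth one_minus_fps_X_power_nth)

lemma prime_dvd_add_power_minus_powers:
  fixes x y :: "'a::comm_ring_1"
  assumes "prime p"
  shows "of_nat p dvd (x + y) ^ p - x ^ p - y ^ p"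
proof -
  define T where "T i = of_nat (p choose i) * x ^ i * y ^ (p - i)" for i
  have p: "p \<ge> 2" using prime_ge_2_nat[OF assms] .
  then have "{..p} = insert 0 (insert p {1..<p})" by auto
  then have "(x + y) ^ p = y ^ p + x ^ p + (\<Sum>i\<in>{1..<p}. T i)"
    using p unfolding binomial_ring T_def by simp
  moreover have "of_nat p dvd (\<Sum>i\<in>{1..<p}. T i)"
  proof (intro dvd_sum)
    fix i assume "i \<in> {1..<p}"
    then have "p dvd p choose i" using assms by (intro dvd_choose_prime) auto
    then show "of_nat p dvd T i" unfolding T_def by (elim dvdE) (simp add: mult.assoc)
  qed
  ultimately show ?thesis by (simp add: algebra_simps)
qed

lemma prime_square_dvd_add_power_minus_power:
  fixes a r :: "'a::comm_ring_1"
  assumes "prime p"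
  shows "of_nat p ^ 2 dvd (a + of_nat p * r) ^ p - a ^ p"
proof -
  define c :: 'a where "c = of_nat p"
  define T where "T i = of_nat (p choose i) * (c * r) ^ i * a ^ (p - i)" for i
  have p: "p \<ge> 1" using prime_ge_1_nat[OF assms] .
  then have "{..p} = insert 0 {1..p}" by auto
  then have "(a + c * r) ^ p = a ^ p + (\<Sum>i\<in>{1..p}. T i)"
    unfolding binomial_ring[of "c * r" a, simplified add.commute] T_def by simp
  moreover have "c ^ 2 dvd (\<Sum>i\<in>{1..p}. T i)"
  proof (intro dvd_sum)
    fix i assume i: "i \<in> {1..p}"
    show "c ^ 2 dvd T i"
    proof (cases "i = 1")
      case True
      then show ?thesis
        by (simp add: T_def c_def power2_eq_square mult.assoc) (metis mult_dvd_mono dvd_refl dvd_triv_left)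
    next
      case False
      then have "c ^ 2 dvd c ^ i" using i by (intro le_imp_power_dvd) auto
      then show ?thesis unfolding T_def power_mult_distrib by (intro dvd_mult2 dvd_mult)
    qed
  qed
  ultimately show ?thesis by (simp add: c_def)
qed

lemma prime_square_dvd_one_minus_power:
  fixes x :: "'a::comm_ring_1"
  assumes "prime p" "odd p" "p dvd d"
  shows "of_nat p ^ 2 dvd (1 - x) ^ (p * d) - (1 - x ^ p) ^ d"
proof -
  obtain e where e: "d = p * e" using assms(3) by (rule dvdE)
  have "of_nat p dvd (1 + - x) ^ p - 1 ^ p - (- x) ^ p"
    by (rule prime_dvd_add_power_minus_powers[OF assms(1)])
  then obtain r where r: "(1 - x) ^ p = (1 - x ^ p) + of_nat p * r"
    using assms(2) by (auto simp: algebra_simps elim!: dvdE)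
  have "of_nat p ^ 2 dvd ((1 - x) ^ p) ^ p - (1 - x ^ p) ^ p"
    unfolding r by (rule prime_square_dvd_add_power_minus_power[OF assms(1)])
  also have "\<dots> dvd (((1 - x) ^ p) ^ p) ^ e - ((1 - x ^ p) ^ p) ^ e"
    using power_diff_sumr2[of "((1 - x) ^ p) ^ p" e "(1 - x ^ p) ^ p"] by simp
  finally show ?thesis
    by (simp add: e mult.assoc flip: power_mult)
qed

lemma fps_const_dvd_imp_dvd_nth:
  fixes f :: "'a::comm_ring_1 fps"
  shows "fps_const c dvd f \<Longrightarrow> c dvd f $ n"
  by (elim dvdE) simp

lemma dvd_nth_if_dvd_functional_equation:
  fixes B W :: "'a::comm_ring_1 fps"
  assumes "B $ 0 = 1" "m \<ge> 2" "c dvd W $ 0"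
    and "fps_const c dvd B * W - (W oo fps_X ^ m)"
  shows "c dvd W $ n"
proof (induction n rule: less_induct)
  case (less n)
  show ?case
  proof (cases "n = 0")
    case True
    then show ?thesis using assms(3) by simp
  next
    case False
    have "(B * W) $ n = W $ n + (\<Sum>i=1..n. B $ i * W $ (n - i))"
      using assms(1) by (simp add: fps_mult_nth sum.atLeast_Suc_atMost)
    then have W: "W $ n = ((B * W) $ n - (W oo fps_X ^ m) $ n) + (W oo fps_X ^ m) $ n
                    - (\<Sum>i=1..n. B $ i * W $ (n - i))"
      by simp
    have "c dvd (\<Sum>i=1..n. B $ i * W $ (n - i))"
      using False by (intro dvd_sum dvd_mult less.IH) auto
    moreover have "c dvd (W oo fps_X ^ m) $ n"
    proof -
      have "n div m < n" using False assms(2) by simp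
      then show ?thesis using assms(2) by (simp add: fps_compose_fps_X_power_nth less.IH)
    qed
    moreover have "c dvd (B * W) $ n - (W oo fps_X ^ m) $ n"
      using fps_const_dvd_imp_dvd_nth[OF assms(4)] by simp
    ultimately show ?thesis
      unfolding W by (meson dvd_add dvd_diff)
  qed
qed

lemma A_congruent_binomial:
  assumes "prime p" "odd p" "k = (p - 1) * d" "p dvd d"
  shows "int p ^ 2 dvd A p k n - (-1) ^ n * int (d choose n)"
proof -
  have p: "p \<ge> 2" using prime_ge_2_nat[OF assms(1)] .
  define C where "C = ((1 - fps_X) ^ d :: int fps)"
  define W where "W = A_fps p k - C"
  have "k + d = p * d"
    using assms(3) p by (cases p) simp_all
  then have C_mult: "(1 - fps_X) ^ k * C = (1 - fps_X) ^ (p * d)"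
    by (simp add: C_def flip: power_add)
  have C_comp: "C oo fps_X ^ p = (1 - fps_X ^ p) ^ d"
    using p by (simp add: C_def fps_compose_sub_distrib flip: fps_compose_power)
  have "(1 - fps_X) ^ k * W - (W oo fps_X ^ p)
      = ((1 - fps_X) ^ k * A_fps p k - (A_fps p k oo fps_X ^ p)) - ((1 - fps_X) ^ k * C - (C oo fps_X ^ p))"
    unfolding W_def fps_compose_sub_distrib right_diff_distrib by simp
  also have "\<dots> = - ((1 - fps_X) ^ (p * d) - (1 - fps_X ^ p) ^ d)"
    by (simp only: A_fps_functional_equation[OF p] C_mult C_comp diff_self diff_0)
  moreover have "fps_const (int p ^ 2) dvd (1 - fps_X) ^ (p * d) - (1 - fps_X ^ p) ^ d"
    using prime_square_dvd_one_minus_power[OF assms(1,2,4), of fps_X]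
    by (simp add: fps_const_power flip: fps_of_nat)
  ultimately have congruence: "fps_const (int p ^ 2) dvd (1 - fps_X) ^ k * W - (W oo fps_X ^ p)"
    by (simp only: dvd_minus_iff)
  have B0: "((1 - fps_X) ^ k :: int fps) $ 0 = 1" and W0: "W $ 0 = 0"
    by (simp_all add: W_def C_def A_fps_def A_0 one_minus_fps_X_power_nth)
  have "int p ^ 2 dvd W $ n"
    by (rule dvd_nth_if_dvd_functional_equation[OF B0 p _ congruence]) (simp add: W0)
  then show ?thesis
    by (simp add: W_def C_def A_fps_def one_minus_fps_X_power_nth)
qed

lemma prime_dvd_minus_one_power_mult_iff:
  "int p dvd (-1) ^ i * x \<longleftrightarrow> int p dvd x"
  by (cases "even i") simp_all

lemma A_last_nondvd_index_lower_bound: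
  assumes "prime p" "\<not> int p dvd A p k d" "\<forall>n>d. int p dvd A p k n"
  shows "d + k \<le> p * d"
proof -
  define c where "c i = (-1) ^ i * int (k choose i)" for i
  have p: "p \<ge> 2" using prime_ge_2_nat[OF assms(1)] .
  have "(\<Sum>i=0..d+k. c i * A p k (d + k - i))
          = c k * A p k d + (\<Sum>i\<in>{0..d+k} - {k}. c i * A p k (d + k - i))"
    by (subst sum.remove[of _ k]) auto
  moreover have "int p dvd (\<Sum>i\<in>{0..d+k} - {k}. c i * A p k (d + k - i))"
  proof (intro dvd_sum)
    fix i assume "i \<in> {0..d+k} - {k}"
    then consider "i < k" | "i > k" by fastforce
    then show "int p dvd c i * A p k (d + k - i)"
      by cases (simp_all add: c_def assms(3) binomial_eq_0)
  qed
  moreover have "\<not> int p dvd c k * A p k d"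
    using assms(1,2) by (simp add: c_def prime_dvd_minus_one_power_mult_iff)
  ultimately have rhs: "\<not> int p dvd (if p dvd d + k then A p k ((d + k) div p) else 0)"
    using A_recurrence[OF p, of k "d + k"] by (simp add: c_def dvd_add_left_iff)
  then have "p dvd d + k"
    by (cases "p dvd d + k") simp_all
  with rhs have "\<not> int p dvd A p k ((d + k) div p)"
    by simp
  then have "(d + k) div p \<le> d"
    using assms(3) not_le by blast
  then have "p * ((d + k) div p) \<le> p * d"
    by simp
  with \<open>p dvd d + k\<close> show ?thesis
    by simp
qed

lemma A_last_nondvd_index_upper_bound:
  assumes "p \<ge> 2" "\<not> int p dvd A p k d" "\<forall>n>d. int p dvd A p k n"
  shows "p * d \<le> d + k"
proof -
  define c where "c i = (-1) ^ i * int (k choose i)" for i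
  have "(\<Sum>i=0..p*d. c i * A p k (p * d - i)) = A p k d"
    using A_recurrence[OF assms(1), of k "p * d"] assms(1) by (simp add: c_def)
  then have "\<not> int p dvd (\<Sum>i=0..p*d. c i * A p k (p * d - i))"
    using assms(2) by simp
  then obtain i where i: "i \<le> p * d" "\<not> int p dvd c i * A p k (p * d - i)"
    by (meson atLeastAtMost_iff dvd_sum)
  have "i \<le> k"
  proof (rule ccontr)
    assume "\<not> i \<le> k"
    then have "c i = 0" by (simp add: c_def binomial_eq_0)
    with i(2) show False by simp
  qed
  moreover have "p * d - i \<le> d"
  proof (rule ccontr)
    assume "\<not> p * d - i \<le> d"
    then have "int p dvd A p k (p * d - i)" using assms(3) by simp
    with i(2) show False by simp
  qed
  ultimately show ?thesis
    using i(1) by linarith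
qed

lemma minus_one_dvd_if_A_eventually_dvd:
  assumes "prime p" "\<forall>n\<ge>N. int p dvd A p k n"
  shows "(p - 1) dvd k"
proof -
  define S where "S = {n. \<not> int p dvd A p k n}"
  have "S \<subseteq> {..<N}"
    using assms(2) by (auto simp: S_def not_less[symmetric])
  then have fin: "finite S" by (rule finite_subset) simp
  have "0 \<in> S"
    using prime_gt_1_nat[OF assms(1)] by (simp add: S_def A_0)
  define d where "d = Max S"
  have "d \<in> S"
    using fin \<open>0 \<in> S\<close> unfolding d_def by (intro Max_in) auto
  moreover have "\<forall>n>d. n \<notin> S"
    using Max_ge[OF fin] leD unfolding d_def by blast
  ultimately have "\<not> int p dvd A p k d" and "\<forall>n>d. int p dvd A p k n"
    unfolding S_def by auto
  then have "d + k \<le> p * d" and "p * d \<le> d + k"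
    using A_last_nondvd_index_lower_bound[OF assms(1)]
      A_last_nondvd_index_upper_bound[OF prime_ge_2_nat[OF assms(1)]] by simp_all
  moreover have "(p - 1) * d = p * d - d"
    by (simp add: diff_mult_distrib)
  ultimately have "k = (p - 1) * d"
    using \<open>d + k \<le> p * d\<close> by linarith
  then show ?thesis by simp
qed

theorem corollary3p4:
  fixes p k :: nat
  assumes "prime p" and "p \<ge> 3" and "k \<ge> 1"
    and "\<exists>N. \<forall>n\<ge>N. A p k n \<noteq> 0 \<and> multiplicity (int p) (A p k n) = 1"
  shows "((p - 1) dvd k \<longrightarrow> \<not> p dvd k)
       \<and> (\<forall>k' q :: nat. \<not> (p - 1) dvd k \<and> k = (p - 1) * k' + q \<and> 1 \<le> q \<and> q \<le> p - 2
            \<and> p dvd (k' + 1) \<longrightarrow> \<not> p ^ 2 dvd (k' + 1))"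
proof -
  obtain N where N: "\<forall>n\<ge>N. A p k n \<noteq> 0 \<and> multiplicity (int p) (A p k n) = 1"
    using assms(4) by blast
  have "\<not> is_unit (int p)"
    using prime_gt_1_nat[OF assms(1)] by simp
  then have valuation_one: "int p dvd A p k n \<and> \<not> int p ^ 2 dvd A p k n" if "n \<ge> N" for n
    using N that power_dvd_iff_le_multiplicity[of "A p k n" "int p" 1]
      power_dvd_iff_le_multiplicity[of "A p k n" "int p" 2] by simp
  then have "(p - 1) dvd k"
    using minus_one_dvd_if_A_eventually_dvd[OF assms(1)] by blast
  moreover have "\<not> p dvd k"
  proof
    assume "p dvd k"
    obtain d where d: "k = (p - 1) * d"
      using \<open>(p - 1) dvd k\<close> by (elim dvdE)
    have "\<not> p dvd p - 1"
      using assms(2) by (auto dest: dvd_imp_le)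
    then have "p dvd d"
      using \<open>p dvd k\<close> assms(1) by (simp add: d prime_dvd_mult_iff)
    define n where "n = max N (Suc d)"
    have "int p ^ 2 dvd A p k n"
      using A_congruent_binomial[OF assms(1) prime_odd_nat[OF assms(1)] d \<open>p dvd d\<close>, of n] assms(2)
      by (simp add: n_def binomial_eq_0)
    then show False
      using valuation_one[of n] by (simp add: n_def)
  qed
  \<comment> \<open>(b) holds vacuously: its hypothesis contradicts (p - 1) dvd k.\<close>
  ultimately show ?thesis
    by blast
qed

end
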